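(* Let $\mathcal{H}$ be a real Hilbert space, $A:\mathcal{H}\rightrightarrows\mathcal{H}$ maximal monotone with $A^{-1}(0)\neq\emptyset$, $\theta>0$, $p\geq1$ an integer, and let $(x,\lambda):[0,+\infty)\to\mathcal{H}\times(0,+\infty)$ be a global solution of \[ \dot{x}(t)+x(t)-(I+\lambda(t)A)^{-1}x(t)=0,\qquad \lambda(t)\,\|(I+\lambda(t)A)^{-1}x(t)-x(t)\|^{p-1}=\theta, \] with $x(0)\in\{x:0\notin Ax\}$. Fix $z\in A^{-1}(0)$ and let $\mathcal{E}(t)=\frac12\|x(t)-z\|^2$. Then \[ \frac{d\mathcal{E}(t)}{dt}\leq-\|x(t)-(I+\lambda(t)A)^{-1}x(t)\|^2 . \]
   Context: $(I+\lambda A)^{-1}$ is the resolvent of $A$ of index $\lambda>0$; $A^{-1}(0)=\{x:0\in Ax\}$. *)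

theory Defs
  imports "HOL-Analysis.Analysis"
begin

definition monotone_op :: "('a::real_inner \<Rightarrow> 'a set) \<Rightarrow> bool" where
  "monotone_op A \<longleftrightarrow> (\<forall>x y u v. u \<in> A x \<longrightarrow> v \<in> A y \<longrightarrow> inner (x - y) (u - v) \<ge> 0)"

definition maximal_monotone :: "('a::real_inner \<Rightarrow> 'a set) \<Rightarrow> bool" where
  "maximal_monotone A \<longleftrightarrow> monotone_op A \<and>
     (\<forall>B. monotone_op B \<longrightarrow> (\<forall>x. A x \<subseteq> B x) \<longrightarrow> B = A)"

text \<open>Resolvent (I + lam A)^{-1} x: the unique y with x \<in> y + lam A y.
  It is single-valued and everywhere defined for maximal monotone A and lam > 0.\<close>
definition resolvent :: "('a::real_inner \<Rightarrow> 'a set) \<Rightarrow> real \<Rightarrow> 'a \<Rightarrow> 'a" where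
  "resolvent A lam x = (THE y. \<exists>u \<in> A y. x = y + lam *\<^sub>R u)"

definition zeros_op :: "('a::real_inner \<Rightarrow> 'a set) \<Rightarrow> 'a set" where
  "zeros_op A = {x. 0 \<in> A x}"

end

theory Submission
  imports Defs
begin

(* With J = (I + \<lambda>A)^{-1} x and x = J + \<lambda>u, u \<in> A J, the derivative of the energy along the flow is
   <x - z, J - x> = -|x - J|^2 - \<lambda><J - z, u>, and the last term is nonpositive by monotonicity
   because 0 \<in> A z.  The real work is to make J meaningful, i.e. Minty's theorem: x = y + \<lambda>u has a
   solution with u \<in> A y.  A point y works as soon as it lies in every ball
   {y. <y - a, y + \<lambda>v - x> \<le> 0} with v \<in> A a, for then (y, (x - y)/\<lambda>) is monotonically related
   to the graph of A and maximality applies.  In a Hilbert space closed bounded convex sets have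
   the finite intersection property (minimal-norm points of large finite intersections cluster,
   by the parallelogram law), so it suffices to intersect finitely many such balls.  For that,
   minimise the maximum of the finitely many quadratics: at a minimiser, 0 is a convex combination
   of the gradients of the active quadratics, and monotonicity forces the minimal value to be
   nonpositive. *)

lemma inner_diff_add_eq_norm_sq:
  fixes y a b :: "'a::real_inner"
  shows "inner (y - a) (y + b) = (norm (y - (1/2) *\<^sub>R (a - b)))\<^sup>2 - (norm ((1/2) *\<^sub>R (a + b)))\<^sup>2"
  by (simp add: power2_norm_eq_inner inner_diff_left inner_diff_right inner_add_left inner_add_right
      inner_commute algebra_simps)

lemma norm_sq_le_eq_cball:
  fixes c :: "'a::real_normed_vector"
  shows "{y. (norm (y - c))\<^sup>2 \<le> r} = (if r < 0 then {} else cball c (sqrt r))"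
proof (cases "r < 0")
  case True
  then show ?thesis by (auto dest: order.trans[OF zero_le_power2])
next
  case False
  have "d\<^sup>2 \<le> r \<longleftrightarrow> d \<le> sqrt r" if "d \<ge> 0" for d :: real
    using False that by (metis not_less real_sqrt_unique real_sqrt_le_iff)
  then show ?thesis
    using False by (auto simp: dist_norm norm_minus_commute)
qed

lemma
  fixes a b :: "'a::real_inner"
  shows closed_quadratic_sublevel: "closed {y. inner (y - a) (y + b) \<le> t}"
    and convex_quadratic_sublevel: "convex {y. inner (y - a) (y + b) \<le> t}"
    and bounded_quadratic_sublevel: "bounded {y. inner (y - a) (y + b) \<le> t}"
proof -
  have eq: "{y. inner (y - a) (y + b) \<le> t} =
      {y. (norm (y - (1/2) *\<^sub>R (a - b)))\<^sup>2 \<le> t + (norm ((1/2) *\<^sub>R (a + b)))\<^sup>2}"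
    unfolding inner_diff_add_eq_norm_sq by (simp add: algebra_simps)
  show "closed {y. inner (y - a) (y + b) \<le> t}"
    by (intro closed_Collect_le continuous_intros)
  show "convex {y. inner (y - a) (y + b) \<le> t}" "bounded {y. inner (y - a) (y + b) \<le> t}"
    unfolding eq norm_sq_le_eq_cball by simp_all
qed

lemma norm_diff_sq_eq_midpoint:
  fixes y y' :: "'a::real_inner"
  shows "(norm (y - y'))\<^sup>2 = 2 * (norm y)\<^sup>2 + 2 * (norm y')\<^sup>2 - 4 * (norm ((1/2) *\<^sub>R y + (1/2) *\<^sub>R y'))\<^sup>2"
  by (simp add: power2_norm_eq_inner inner_diff_left inner_diff_right inner_add_left inner_add_right
      inner_commute algebra_simps)

lemma convex_near_min_norm_dist:
  fixes y y' :: "'a::real_inner"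
  assumes "convex C" and "\<And>c. c \<in> C \<Longrightarrow> s - e \<le> (norm c)\<^sup>2"
    and "y \<in> C" "y' \<in> C" "(norm y)\<^sup>2 \<le> s + e" "(norm y')\<^sup>2 \<le> s + e"
  shows "(norm (y - y'))\<^sup>2 \<le> 8 * e"
proof -
  have "(1/2) *\<^sub>R y + (1/2) *\<^sub>R y' \<in> C"
    using assms(1,3,4) unfolding convex_def by simp
  then show ?thesis
    using assms(2)[of "(1/2) *\<^sub>R y + (1/2) *\<^sub>R y'"] assms(5,6) norm_diff_sq_eq_midpoint[of y y']
    by linarith
qed

lemma nested_convex_near_min_norm_limit:
  fixes C :: "nat \<Rightarrow> 'a::{real_inner,complete_space} set"
  assumes dec: "decseq C" and convex: "\<And>n. convex (C n)"
    and lower: "\<And>n c. c \<in> C n \<Longrightarrow> s - 1 / Suc n \<le> (norm c)\<^sup>2"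
    and y: "\<And>n. y n \<in> C n" "\<And>n. (norm (y n))\<^sup>2 \<le> s + 1 / Suc n"
  obtains p where "\<And>z. (\<And>n. z n \<in> C n) \<Longrightarrow> (\<And>n. (norm (z n))\<^sup>2 \<le> s + 1 / Suc n) \<Longrightarrow> z \<longlonglongrightarrow> p"
proof -
  define \<delta> where "\<delta> n = sqrt (8 / Suc n)" for n :: nat
  have \<delta>_0: "\<delta> \<longlonglongrightarrow> 0"
    unfolding \<delta>_def using tendsto_real_sqrt[OF LIMSEQ_Suc[OF lim_const_over_n[of 8]]] by simp
  have close: "dist u v \<le> \<delta> n"
    if "u \<in> C n" "v \<in> C n" "(norm u)\<^sup>2 \<le> s + 1 / Suc n" "(norm v)\<^sup>2 \<le> s + 1 / Suc n" for u v n
  proof -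
    have "(norm (u - v))\<^sup>2 \<le> 8 * (1 / Suc n)"
      using that by (intro convex_near_min_norm_dist[OF convex lower]) auto
    then show ?thesis unfolding \<delta>_def dist_norm by (simp add: real_le_rsqrt)
  qed
  have y_close: "dist (y n) (y m) \<le> \<delta> n" if "n \<le> m" for n m
  proof (rule close)
    show "y m \<in> C n" using y(1)[of m] decseqD[OF dec that] by blast
    have "1 / real (Suc m) \<le> 1 / Suc n" using that by (simp add: frac_le)
    then show "(norm (y m))\<^sup>2 \<le> s + 1 / Suc n" using y(2)[of m] by linarith
  qed (use y in auto)
  have "Cauchy y"
  proof (rule CauchyI')
    fix e :: real assume "e > 0"
    then obtain N where "\<And>n. n \<ge> N \<Longrightarrow> \<delta> n < e"
      using order_tendstoD(2)[OF \<delta>_0] by (auto simp: eventually_sequentially)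
    then show "\<exists>N. \<forall>m\<ge>N. \<forall>n>m. dist (y m) (y n) < e"
      using y_close by (meson le_less_trans less_imp_le)
  qed
  then obtain p where p: "y \<longlonglongrightarrow> p" using Cauchy_convergent unfolding convergent_def by blast
  show thesis
  proof (rule that)
    fix z assume z: "\<And>n. z n \<in> C n" "\<And>n. (norm (z n))\<^sup>2 \<le> s + 1 / Suc n"
    have lim: "(\<lambda>n. \<delta> n + dist (y n) p) \<longlonglongrightarrow> 0"
      using tendsto_add_zero[OF \<delta>_0 tendsto_dist_iff[THEN iffD1, OF p]] .
    have bound: "norm (dist (z n) p) \<le> \<delta> n + dist (y n) p" for n
    proof -
      have "dist (z n) (y n) \<le> \<delta> n" using z y by (intro close) auto
      then show ?thesis using dist_triangle[of "z n" p "y n"] by simp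
    qed
    have "(\<lambda>n. dist (z n) p) \<longlonglongrightarrow> 0"
      using Lim_null_comparison[OF always_eventually[OF allI[OF bound]] lim] .
    then show "z \<longlonglongrightarrow> p" by (rule tendsto_dist_iff[THEN iffD2])
  qed
qed

lemma convex_family_common_closure_point:
  fixes \<C> :: "'a::{real_inner,complete_space} set set"
  assumes "\<C> \<noteq> {}" and convex: "\<And>C. C \<in> \<C> \<Longrightarrow> convex C" and nonempty: "\<And>C. C \<in> \<C> \<Longrightarrow> C \<noteq> {}"
    and Int: "\<And>C D. C \<in> \<C> \<Longrightarrow> D \<in> \<C> \<Longrightarrow> C \<inter> D \<in> \<C>" and bounded: "bounded (\<Union>\<C>)"
  shows "\<exists>p. \<forall>C\<in>\<C>. p \<in> closure C"
proof -
  define \<phi> :: "'a set \<Rightarrow> real" where "\<phi> C = Inf ((\<lambda>y. (norm y)\<^sup>2) ` C)" for C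
  define s where "s = (SUP C\<in>\<C>. \<phi> C)"
  have bdd: "bdd_below ((\<lambda>y. (norm y)\<^sup>2) ` S)" for S :: "'a set"
    by (rule bdd_belowI[of _ 0]) auto
  have \<phi>_le: "y \<in> C \<Longrightarrow> \<phi> C \<le> (norm y)\<^sup>2" for C y
    unfolding \<phi>_def by (rule cInf_lower) (auto intro: bdd)
  obtain M where M: "\<forall>y\<in>\<Union>\<C>. norm y \<le> M" using bounded unfolding bounded_iff ..
  have "\<phi> C \<le> M\<^sup>2" if C: "C \<in> \<C>" for C
  proof -
    obtain y where y: "y \<in> C" using nonempty[OF C] by blast
    then have "norm y \<le> M" using M C by blast
    then show ?thesis using \<phi>_le[OF y] power_mono[of "norm y" M 2] by simp
  qed
  then have bdd_\<phi>: "bdd_above (\<phi> ` \<C>)" by (intro bdd_aboveI2) auto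
  have near_min: "\<exists>z. \<forall>n. z n \<in> G n \<and> (norm (z n))\<^sup>2 \<le> s + 1 / Suc n"
    if G: "\<And>n. G n \<in> \<C>" for G
  proof (intro choice allI)
    fix n
    have "\<phi> (G n) \<le> s" unfolding s_def using G bdd_\<phi> by (rule cSUP_upper)
    moreover obtain y where "y \<in> G n" "(norm y)\<^sup>2 < \<phi> (G n) + 1 / Suc n"
      using cInf_less_iff[OF _ bdd, of "G n" "\<phi> (G n) + 1 / Suc n"] nonempty[OF G]
      unfolding \<phi>_def by auto
    ultimately show "\<exists>y. y \<in> G n \<and> (norm y)\<^sup>2 \<le> s + 1 / Suc n" by force
  qed
  have "\<exists>C\<in>\<C>. s - 1 / Suc n < \<phi> C" for n
    using less_cSUP_iff[OF \<open>\<C> \<noteq> {}\<close> bdd_\<phi>, of "s - 1 / Suc n"] unfolding s_def[symmetric] by simp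
  then obtain Cn where Cn: "\<And>n. Cn n \<in> \<C>" "\<And>n. s - 1 / Suc n < \<phi> (Cn n)" by metis
  define D where "D n = (\<Inter>m\<le>n. Cn m)" for n
  have D: "D n \<in> \<C>" for n
    by (induction n) (simp_all add: D_def atMost_Suc Cn(1) Int)
  have lower: "s - 1 / Suc n \<le> (norm c)\<^sup>2" if "c \<in> D n" for n c
    using Cn(2)[of n] \<phi>_le[of c "Cn n"] that unfolding D_def by force
  have dec: "decseq D" unfolding D_def by (intro decseq_SucI) (auto simp: atMost_Suc)
  obtain y where y: "\<And>n. y n \<in> D n" "\<And>n. (norm (y n))\<^sup>2 \<le> s + 1 / Suc n"
    using near_min[of D] D by blast
  obtain p where p: "\<And>z. (\<And>n. z n \<in> D n) \<Longrightarrow> (\<And>n. (norm (z n))\<^sup>2 \<le> s + 1 / Suc n) \<Longrightarrow> z \<longlonglongrightarrow> p"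
    using nested_convex_near_min_norm_limit[OF dec convex[OF D] lower y] by blast
  have "p \<in> closure C" if C: "C \<in> \<C>" for C
  proof -
    obtain z where z: "\<And>n. z n \<in> D n \<inter> C" "\<And>n. (norm (z n))\<^sup>2 \<le> s + 1 / Suc n"
      using near_min[of "\<lambda>n. D n \<inter> C"] Int[OF D C] by blast
    then have "z \<longlonglongrightarrow> p" by (intro p) auto
    then show "p \<in> closure C" using z(1) by (auto simp: closure_sequential)
  qed
  then show ?thesis by blast
qed

lemma closed_convex_family_Inter_nonempty:
  fixes K :: "'i \<Rightarrow> 'a::{real_inner,complete_space} set"
  assumes closed: "\<And>i. i \<in> T \<Longrightarrow> closed (K i)" and convex: "\<And>i. i \<in> T \<Longrightarrow> convex (K i)"
    and i\<^sub>0: "i\<^sub>0 \<in> T" and bounded: "bounded (K i\<^sub>0)"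
    and finite_Inter: "\<And>F. finite F \<Longrightarrow> F \<subseteq> T \<Longrightarrow> (\<Inter>i\<in>insert i\<^sub>0 F. K i) \<noteq> {}"
  shows "\<exists>p. \<forall>i\<in>T. p \<in> K i"
proof -
  define KF where "KF F = (\<Inter>i\<in>insert i\<^sub>0 F. K i)" for F
  define \<C> where "\<C> = KF ` {F. finite F \<and> F \<subseteq> T}"
  have "\<C> \<noteq> {}" unfolding \<C>_def by blast
  moreover have "convex C" if "C \<in> \<C>" for C
    using that convex i\<^sub>0 unfolding \<C>_def KF_def by (auto intro!: convex_Int convex_INT)
  moreover have "C \<noteq> {}" if "C \<in> \<C>" for C using that finite_Inter unfolding \<C>_def KF_def by auto
  moreover have "C \<inter> D \<in> \<C>" if C: "C \<in> \<C>" and D: "D \<in> \<C>" for C D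
  proof -
    obtain F where F: "F \<in> {F. finite F \<and> F \<subseteq> T}" "C = KF F"
      using C unfolding \<C>_def by (rule imageE)
    obtain G where G: "G \<in> {F. finite F \<and> F \<subseteq> T}" "D = KF G"
      using D unfolding \<C>_def by (rule imageE)
    have "C \<inter> D = KF (F \<union> G)" unfolding F(2) G(2) KF_def by auto
    moreover have "F \<union> G \<in> {F. finite F \<and> F \<subseteq> T}" using F(1) G(1) by auto
    ultimately show ?thesis unfolding \<C>_def by (rule image_eqI)
  qed
  moreover have "bounded (\<Union>\<C>)" using bounded by (rule bounded_subset) (auto simp: \<C>_def KF_def)
  ultimately have "\<exists>p. \<forall>C\<in>\<C>. p \<in> closure C" by (rule convex_family_common_closure_point)
  then obtain p where p: "\<And>C. C \<in> \<C> \<Longrightarrow> p \<in> closure C" by blast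
  have "p \<in> K i" if "i \<in> T" for i
  proof -
    have "KF {i} \<in> \<C>" using that unfolding \<C>_def by auto
    then have "p \<in> closure (KF {i})" by (rule p)
    moreover have "closure (KF {i}) \<subseteq> K i"
      using closure_mono[of "KF {i}" "K i"] closure_closed[OF closed[OF that]] unfolding KF_def by auto
    ultimately show ?thesis by blast
  qed
  then show ?thesis by blast
qed

lemma convex_sublevels_attains_inf:
  fixes h :: "'a::{real_inner,complete_space} \<Rightarrow> real"
  assumes bdd: "bdd_below (range h)"
    and sublevels: "\<And>c. closed {y. h y \<le> c}" "\<And>c. convex {y. h y \<le> c}" "\<And>c. bounded {y. h y \<le> c}"
  obtains p where "\<And>y. h p \<le> h y"
proof -
  define m where "m = Inf (range h)"
  define L where "L n = {y. h y \<le> m + 1 / Suc n}" for n :: nat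
  have "\<exists>p. \<forall>n\<in>UNIV. p \<in> L n"
  proof (rule closed_convex_family_Inter_nonempty[where i\<^sub>0=0 and T=UNIV])
    fix F :: "nat set" assume "finite F"
    define N where "N = Max (insert 0 F)"
    obtain y where y: "h y < m + 1 / Suc N"
      using cInf_less_iff[OF _ bdd, of "m + 1 / Suc N"] unfolding m_def by auto
    have "y \<in> L n" if "n \<in> insert 0 F" for n
    proof -
      have "n \<le> N" unfolding N_def using \<open>finite F\<close> that by simp
      then have "1 / real (Suc N) \<le> 1 / Suc n" by (simp add: frac_le)
      then show ?thesis unfolding L_def using y by simp
    qed
    then show "(\<Inter>n\<in>insert 0 F. L n) \<noteq> {}" by blast
  qed (simp_all add: L_def sublevels)
  then obtain p where p: "\<And>n. h p \<le> m + 1 / Suc n" unfolding L_def by blast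
  have "h p \<le> m"
  proof (rule field_le_epsilon)
    fix e :: real assume "e > 0"
    then obtain n where "inverse (real (Suc n)) < e" using reals_Archimedean by blast
    then show "h p \<le> m + e" using p[of n] by (simp add: inverse_eq_divide)
  qed
  then show thesis using that cInf_lower[OF _ bdd] unfolding m_def by (meson order_trans rangeI)
qed

lemma convex_hull_finite_image_weights:
  assumes "finite J" and "y \<in> convex hull (g ` J)"
  obtains u where "\<And>i. i \<in> J \<Longrightarrow> 0 \<le> u i" "sum u J = 1" "(\<Sum>i\<in>J. u i *\<^sub>R g i) = y"
proof -
  obtain U where U: "U \<subseteq> J" "inj_on g U" "g ` J = g ` U"
    using subset_image_inj[of "g ` J" g J] by blast
  have "finite (g ` U)" using U(1) assms(1) finite_subset by blast
  moreover have "y \<in> convex hull (g ` U)" using assms(2) U(3) by simp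
  ultimately obtain v where v: "\<forall>x\<in>g ` U. 0 \<le> v x" "sum v (g ` U) = 1" "(\<Sum>x\<in>g ` U. v x *\<^sub>R x) = y"
    by (subst (asm) convex_hull_finite) auto
  define u where "u i = (if i \<in> U then v (g i) else 0)" for i
  have "sum u J = sum u U"
    by (rule sum.mono_neutral_right[OF assms(1) U(1)]) (simp add: u_def)
  also have "\<dots> = sum v (g ` U)"
    unfolding sum.reindex[OF U(2)] by (rule sum.cong) (simp_all add: u_def)
  finally have "sum u J = 1" using v(2) by simp
  have "(\<Sum>i\<in>J. u i *\<^sub>R g i) = (\<Sum>i\<in>U. u i *\<^sub>R g i)"
    by (rule sum.mono_neutral_right[OF assms(1) U(1)]) (simp add: u_def)
  also have "\<dots> = (\<Sum>x\<in>g ` U. v x *\<^sub>R x)"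
    unfolding sum.reindex[OF U(2)] by (rule sum.cong) (simp_all add: u_def)
  finally have "(\<Sum>i\<in>J. u i *\<^sub>R g i) = y" using v(3) by simp
  moreover have "0 \<le> u i" for i using v(1) by (simp add: u_def)
  ultimately show thesis using that \<open>sum u J = 1\<close> by blast
qed

lemma finite_separate_zero:
  fixes S :: "'a::real_inner set"
  assumes "finite S" and "0 \<notin> convex hull S"
  obtains q where "\<And>x. x \<in> S \<Longrightarrow> 0 < inner q x"
proof (cases "S = {}")
  case True
  then show thesis using that by blast
next
  case False
  have "compact (convex hull S)" using assms(1) by (rule finite_imp_compact_convex_hull)
  then obtain q where q: "q \<in> convex hull S" "\<And>c. c \<in> convex hull S \<Longrightarrow> dist 0 q \<le> dist 0 c"
    using continuous_attains_inf[of "convex hull S" "dist 0"] False by (auto intro: continuous_intros)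
  have "0 < inner q x" if "x \<in> S" for x
  proof -
    have "inner (0 - q) (x - q) \<le> 0"
      using q hull_inc[OF that] compact_imp_closed[OF \<open>compact (convex hull S)\<close>]
      by (intro any_closest_point_dot[of "convex hull S"]) auto
    then have "inner q q \<le> inner q x" by (simp add: inner_diff_right)
    moreover have "0 < inner q q" using q(1) assms(2) by auto
    ultimately show ?thesis by linarith
  qed
  then show thesis by (rule that)
qed

lemma inner_shift_expand:
  fixes y q a b :: "'a::real_inner"
  shows "inner (y - t *\<^sub>R q - a) (y - t *\<^sub>R q + b) =
     inner (y - a) (y + b) - t * inner q (2 *\<^sub>R y + b - a) + t\<^sup>2 * (norm q)\<^sup>2"
proof -
  have e: "y - t *\<^sub>R q - a = (y - a) - t *\<^sub>R q" "y - t *\<^sub>R q + b = (y + b) - t *\<^sub>R q"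
    by (simp_all add: algebra_simps)
  have nq: "inner q q = norm q * norm q" by (metis power2_eq_square power2_norm_eq_inner)
  show ?thesis unfolding e using nq
    by (simp add: power2_norm_eq_inner power2_eq_square inner_diff_left inner_diff_right inner_add_left
      inner_add_right inner_commute ring_distribs)
qed

lemma max_quadratics_minimizer_stationary:
  fixes a b :: "'i \<Rightarrow> 'a::real_inner"
  assumes "finite I"
    and le_m: "\<And>i. i \<in> I \<Longrightarrow> inner (p - a i) (p + b i) \<le> m"
    and min: "\<And>y. \<exists>i\<in>I. m \<le> inner (y - a i) (y + b i)"
  shows "0 \<in> convex hull ((\<lambda>i. 2 *\<^sub>R p + b i - a i) ` {i\<in>I. inner (p - a i) (p + b i) = m})"
proof (rule ccontr)
  define f where "f i y = inner (y - a i) (y + b i)" for i y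
  \<comment> \<open>the gradient of f i at p\<close>
  define g where "g i = 2 *\<^sub>R p + b i - a i" for i
  define J where "J = {i\<in>I. f i p = m}"
  assume "\<not> ?thesis"
  then have "0 \<notin> convex hull (g ` J)" unfolding g_def J_def f_def .
  moreover have "finite (g ` J)" using assms(1) unfolding J_def by simp
  ultimately obtain q where "\<And>x. x \<in> g ` J \<Longrightarrow> 0 < inner q x"
    using finite_separate_zero by blast
  then have q: "\<And>i. i \<in> J \<Longrightarrow> 0 < inner q (g i)" by blast
  have along: "f i (p - t *\<^sub>R q) = f i p - t * inner q (g i) + t\<^sup>2 * (norm q)\<^sup>2" for i t
    unfolding f_def g_def by (rule inner_shift_expand)
  have "\<forall>\<^sub>F t in at_right 0. f i (p - t *\<^sub>R q) < m" if i: "i \<in> I" for i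
  proof (cases "i \<in> J")
    case True
    have "((\<lambda>t. t * (norm q)\<^sup>2) \<longlongrightarrow> 0 * (norm q)\<^sup>2) (at_right 0)" by (intro tendsto_intros)
    then have "\<forall>\<^sub>F t in at_right 0. t * (norm q)\<^sup>2 < inner q (g i)"
      using q[OF True] by (auto dest: order_tendstoD(2))
    with eventually_at_right_less[of 0] show ?thesis
    proof eventually_elim
      case (elim t)
      then have "t * (t * (norm q)\<^sup>2) < t * inner q (g i)" by simp
      then show ?case using along[of i t] True unfolding J_def by (simp add: power2_eq_square)
    qed
  next
    case False
    have "((\<lambda>t. f i p - t * inner q (g i) + t\<^sup>2 * (norm q)\<^sup>2)
        \<longlongrightarrow> f i p - 0 * inner q (g i) + 0\<^sup>2 * (norm q)\<^sup>2) (at_right 0)"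
      by (intro tendsto_intros)
    then have "((\<lambda>t. f i (p - t *\<^sub>R q)) \<longlongrightarrow> f i p) (at_right 0)" unfolding along by simp
    moreover have "f i p < m" using le_m[OF i] i False unfolding J_def f_def by auto
    ultimately show ?thesis by (rule order_tendstoD(2))
  qed
  then have "\<forall>\<^sub>F t in at_right 0. \<forall>i\<in>I. f i (p - t *\<^sub>R q) < m"
    using assms(1) by (intro eventually_ball_finite) auto
  then obtain t where "\<forall>i\<in>I. f i (p - t *\<^sub>R q) < m"
    using eventually_happens'[OF trivial_limit_at_right_real] by blast
  then show False using min[of "p - t *\<^sub>R q"] unfolding f_def by fastforce
qed

lemma monotone_weighted_mean_inner_le:
  fixes A B :: "'i \<Rightarrow> 'a::real_inner"
  assumes "finite J" and u: "\<And>i. i \<in> J \<Longrightarrow> 0 \<le> u i" and u1: "sum u J = 1"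
    and mon: "\<And>i j. i \<in> J \<Longrightarrow> j \<in> J \<Longrightarrow> 0 \<le> inner (A i - A j) (B i - B j)"
  shows "inner (\<Sum>i\<in>J. u i *\<^sub>R A i) (\<Sum>i\<in>J. u i *\<^sub>R B i) \<le> (\<Sum>i\<in>J. u i * inner (A i) (B i))"
proof -
  define S where "S = (\<Sum>i\<in>J. u i * inner (A i) (B i))"
  define P where "P = inner (\<Sum>i\<in>J. u i *\<^sub>R A i) (\<Sum>i\<in>J. u i *\<^sub>R B i)"
  have "(\<Sum>i\<in>J. \<Sum>j\<in>J. u i * u j * inner (A i) (B i)) = (\<Sum>i\<in>J. u i * inner (A i) (B i) * sum u J)"
    by (simp add: sum_distrib_left sum_distrib_right algebra_simps)
  then have diag: "(\<Sum>i\<in>J. \<Sum>j\<in>J. u i * u j * inner (A i) (B i)) = S"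
    using u1 by (simp add: S_def)
  have diag': "(\<Sum>i\<in>J. \<Sum>j\<in>J. u i * u j * inner (A j) (B j)) = S"
    unfolding diag[symmetric] by (subst (2) sum.swap) (simp add: mult.commute)
  have cross: "(\<Sum>i\<in>J. \<Sum>j\<in>J. u i * u j * inner (A j) (B i)) = P"
    by (simp add: P_def inner_sum_left inner_sum_right sum_distrib_left mult.assoc)
  have cross': "(\<Sum>i\<in>J. \<Sum>j\<in>J. u i * u j * inner (A i) (B j)) = P"
    unfolding cross[symmetric] by (subst (2) sum.swap) (simp add: mult.commute)
  have "0 \<le> (\<Sum>i\<in>J. \<Sum>j\<in>J. u i * u j * inner (A i - A j) (B i - B j))"
    using u mon by (intro sum_nonneg mult_nonneg_nonneg) auto
  also have "\<dots> = S - P - (P - S)"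
    by (simp add: inner_diff_left inner_diff_right right_diff_distrib sum_subtractf
        diag diag' cross cross')
  finally show ?thesis unfolding S_def P_def by simp
qed

lemma stationary_combination_value_nonpos:
  fixes a b :: "'i \<Rightarrow> 'a::real_inner"
  assumes "finite J" and u: "\<And>i. i \<in> J \<Longrightarrow> 0 \<le> u i" and u1: "sum u J = 1"
    and stationary: "(\<Sum>i\<in>J. u i *\<^sub>R (2 *\<^sub>R y + b i - a i)) = 0"
    and mon: "\<And>i j. i \<in> J \<Longrightarrow> j \<in> J \<Longrightarrow> 0 \<le> inner (a i - a j) (b i - b j)"
    and active: "\<And>i. i \<in> J \<Longrightarrow> inner (y - a i) (y + b i) = m"
  shows "m \<le> 0"
proof -
  define ma where "ma = (\<Sum>i\<in>J. u i *\<^sub>R a i)"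
  define mb where "mb = (\<Sum>i\<in>J. u i *\<^sub>R b i)"
  have "(\<Sum>i\<in>J. u i *\<^sub>R (2 *\<^sub>R y + b i - a i)) = 2 *\<^sub>R y + mb - ma"
    using u1 by (simp add: ma_def mb_def algebra_simps sum.distrib sum_subtractf scaleR_sum_left[symmetric]
        sum_distrib_right[symmetric])
  then have y: "y = (1/2) *\<^sub>R (ma - mb)" using stationary by (simp add: algebra_simps)
  have "m = (\<Sum>i\<in>J. u i * inner (y - a i) (y + b i))"
    using active u1 by (simp add: sum_distrib_right[symmetric])
  also have "\<dots> = inner y y + inner y mb - inner ma y - (\<Sum>i\<in>J. u i * inner (a i) (b i))"
    using u1 by (simp add: ma_def mb_def inner_diff_left inner_add_right inner_sum_left inner_sum_right
        algebra_simps sum.distrib sum_subtractf sum_distrib_right[symmetric])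
  also have "\<dots> \<le> inner y y + inner y mb - inner ma y - inner ma mb"
    using monotone_weighted_mean_inner_le[OF assms(1) u u1 mon] unfolding ma_def mb_def by simp
  also have "\<dots> = - (norm (ma + mb))\<^sup>2 / 4"
    unfolding y by (simp add: power2_norm_eq_inner inner_diff_left inner_diff_right inner_add_left
        inner_add_right inner_commute algebra_simps)
  also have "\<dots> \<le> 0" by simp
  finally show ?thesis .
qed

lemma max_quadratics_attains_min:
  fixes a b :: "'i \<Rightarrow> 'a::{real_inner,complete_space}"
  assumes "finite I" and "I \<noteq> {}"
  shows "\<exists>p m. (\<forall>i\<in>I. inner (p - a i) (p + b i) \<le> m) \<and> (\<forall>y. \<exists>i\<in>I. m \<le> inner (y - a i) (y + b i))"
proof -
  define h where "h y = Max ((\<lambda>i. inner (y - a i) (y + b i)) ` I)" for y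
  have h_le: "h y \<le> c \<longleftrightarrow> (\<forall>i\<in>I. inner (y - a i) (y + b i) \<le> c)" for y c
    unfolding h_def using assms by simp
  have h_attained: "\<exists>i\<in>I. h y = inner (y - a i) (y + b i)" for y
  proof -
    have "h y \<in> (\<lambda>i. inner (y - a i) (y + b i)) ` I" unfolding h_def using assms by (intro Max_in) auto
    then show ?thesis by auto
  qed
  have sublevel: "{y. h y \<le> c} = (\<Inter>i\<in>I. {y. inner (y - a i) (y + b i) \<le> c})" for c
    unfolding h_le by auto
  obtain i\<^sub>0 where i\<^sub>0: "i\<^sub>0 \<in> I" using assms(2) by blast
  have "- (norm ((1/2) *\<^sub>R (a i\<^sub>0 + b i\<^sub>0)))\<^sup>2 \<le> h y" for y
  proof -
    have "inner (y - a i\<^sub>0) (y + b i\<^sub>0) \<le> h y" using h_le[of y "h y"] i\<^sub>0 by blast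
    then show ?thesis unfolding inner_diff_add_eq_norm_sq
      using zero_le_power2[of "norm (y - (1/2) *\<^sub>R (a i\<^sub>0 - b i\<^sub>0))"] by linarith
  qed
  then have bdd: "bdd_below (range h)" by (intro bdd_belowI2)
  have closed: "closed {y. h y \<le> c}" for c
    unfolding sublevel by (intro closed_INT ballI closed_quadratic_sublevel)
  have convex: "convex {y. h y \<le> c}" for c
    unfolding sublevel by (intro convex_INT ballI convex_quadratic_sublevel)
  have bounded: "bounded {y. h y \<le> c}" for c
    unfolding sublevel using i\<^sub>0 by (intro bounded_subset[OF bounded_quadratic_sublevel]) auto
  obtain p where p: "\<And>y. h p \<le> h y"
    using convex_sublevels_attains_inf[OF bdd closed convex bounded] by blast
  have "\<forall>i\<in>I. inner (p - a i) (p + b i) \<le> h p" using h_le[of p "h p"] by simp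
  moreover have "\<forall>y. \<exists>i\<in>I. h p \<le> inner (y - a i) (y + b i)" using h_attained p by metis
  ultimately show ?thesis by blast
qed

lemma finite_monotone_family_common_point:
  fixes a b :: "'i \<Rightarrow> 'a::{real_inner,complete_space}"
  assumes "finite I"
    and mon: "\<And>i j. i \<in> I \<Longrightarrow> j \<in> I \<Longrightarrow> 0 \<le> inner (a i - a j) (b i - b j)"
  shows "\<exists>y. \<forall>i\<in>I. inner (y - a i) (y + b i) \<le> 0"
proof (cases "I = {}")
  case True
  then show ?thesis by simp
next
  case False
  obtain p m where le_m: "\<And>i. i \<in> I \<Longrightarrow> inner (p - a i) (p + b i) \<le> m"
    and min: "\<And>y. \<exists>i\<in>I. m \<le> inner (y - a i) (y + b i)"
    using max_quadratics_attains_min[OF assms(1) False] by blast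
  define J where "J = {i\<in>I. inner (p - a i) (p + b i) = m}"
  have "finite J" using assms(1) unfolding J_def by simp
  moreover have "0 \<in> convex hull ((\<lambda>i. 2 *\<^sub>R p + b i - a i) ` J)"
    unfolding J_def using max_quadratics_minimizer_stationary[OF assms(1) le_m min] .
  ultimately obtain u where u: "\<And>i. i \<in> J \<Longrightarrow> 0 \<le> u i" "sum u J = 1"
    "(\<Sum>i\<in>J. u i *\<^sub>R (2 *\<^sub>R p + b i - a i)) = 0"
    by (rule convex_hull_finite_image_weights) blast
  have "m \<le> 0"
    using \<open>finite J\<close> u
  proof (rule stationary_combination_value_nonpos)
    show "0 \<le> inner (a i - a j) (b i - b j)" if "i \<in> J" "j \<in> J" for i j
      using mon that unfolding J_def by blast
    show "inner (p - a i) (p + b i) = m" if "i \<in> J" for i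
      using that unfolding J_def by simp
  qed
  then show ?thesis using le_m by (meson order_trans)
qed

lemma monotone_opD: "monotone_op A \<Longrightarrow> u \<in> A x \<Longrightarrow> v \<in> A y \<Longrightarrow> 0 \<le> inner (x - y) (u - v)"
  unfolding monotone_op_def by blast

lemma maximal_monotone_graph_nonempty:
  assumes "maximal_monotone A"
  obtains a v where "v \<in> A a"
proof -
  define B :: "'a \<Rightarrow> 'a set" where "B x = {v. x = 0 \<and> v = 0}" for x
  have "monotone_op B" unfolding monotone_op_def B_def by simp
  then have "(\<forall>x. A x \<subseteq> B x) \<longrightarrow> B = A" using assms unfolding maximal_monotone_def by blast
  moreover have "0 \<in> B 0" unfolding B_def by simp
  ultimately show thesis using that by (metis empty_iff subsetI)
qed

lemma maximal_monotone_memI: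
  assumes mm: "maximal_monotone A" and rel: "\<And>a v. v \<in> A a \<Longrightarrow> 0 \<le> inner (y - a) (u - v)"
  shows "u \<in> A y"
proof -
  define B where "B x = (if x = y then insert u (A x) else A x)" for x
  have monA: "monotone_op A" using mm unfolding maximal_monotone_def by simp
  have rel': "0 \<le> inner (a - y) (v - u)" if "v \<in> A a" for a v
    using rel[OF that] by (simp add: inner_diff_left inner_diff_right)
  have "monotone_op B"
    unfolding monotone_op_def B_def using rel rel' monotone_opD[OF monA] by auto
  moreover have "\<forall>x. A x \<subseteq> B x" unfolding B_def by auto
  ultimately have "B = A" using mm unfolding maximal_monotone_def by blast
  then have "insert u (A y) = A y" using fun_cong[of B A y] unfolding B_def by simp
  then show ?thesis by blast
qed

theorem maximal_monotone_Minty: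
  fixes A :: "'a::{real_inner,complete_space} \<Rightarrow> 'a set"
  assumes mm: "maximal_monotone A" and lam: "lam > 0"
  shows "\<exists>y. \<exists>u\<in>A y. w = y + lam *\<^sub>R u"
proof -
  have monA: "monotone_op A" using mm unfolding maximal_monotone_def by simp
  obtain a\<^sub>0 v\<^sub>0 where v\<^sub>0: "v\<^sub>0 \<in> A a\<^sub>0" using maximal_monotone_graph_nonempty[OF mm] .
  define T where "T = {(a, v). v \<in> A a}"
  define K where "K = (\<lambda>(a, v). {y. inner (y - a) (y + (lam *\<^sub>R v - w)) \<le> 0})"
  have "\<exists>y. \<forall>i\<in>T. y \<in> K i"
  proof (rule closed_convex_family_Inter_nonempty[where i\<^sub>0 = "(a\<^sub>0, v\<^sub>0)"])
    fix F assume F: "finite F" "F \<subseteq> T"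
    have "\<exists>y. \<forall>i\<in>insert (a\<^sub>0, v\<^sub>0) F. inner (y - fst i) (y + (lam *\<^sub>R snd i - w)) \<le> 0"
    proof (rule finite_monotone_family_common_point)
      fix i j assume "i \<in> insert (a\<^sub>0, v\<^sub>0) F" "j \<in> insert (a\<^sub>0, v\<^sub>0) F"
      then have "snd i \<in> A (fst i)" "snd j \<in> A (fst j)" using F v\<^sub>0 unfolding T_def by auto
      then have "0 \<le> lam * inner (fst i - fst j) (snd i - snd j)"
        using lam monotone_opD[OF monA] by simp
      then show "0 \<le> inner (fst i - fst j) ((lam *\<^sub>R snd i - w) - (lam *\<^sub>R snd j - w))"
        by (simp add: inner_diff_right right_diff_distrib)
    qed (use F in simp)
    then show "(\<Inter>i\<in>insert (a\<^sub>0, v\<^sub>0) F. K i) \<noteq> {}" unfolding K_def by (auto simp: case_prod_beta)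
  qed (use v\<^sub>0 in \<open>auto simp: T_def K_def closed_quadratic_sublevel convex_quadratic_sublevel
      bounded_quadratic_sublevel\<close>)
  then obtain y where y: "\<And>a v. v \<in> A a \<Longrightarrow> inner (y - a) (y + (lam *\<^sub>R v - w)) \<le> 0"
    unfolding T_def K_def by auto
  define u where "u = (1 / lam) *\<^sub>R (w - y)"
  have "u \<in> A y"
  proof (rule maximal_monotone_memI[OF mm])
    fix a v assume "v \<in> A a"
    have "u - v = (- 1 / lam) *\<^sub>R (y + (lam *\<^sub>R v - w))"
      using lam by (simp add: u_def algebra_simps)
    then show "0 \<le> inner (y - a) (u - v)"
      using y[OF \<open>v \<in> A a\<close>] lam by (simp add: divide_nonpos_pos mult_le_0_iff)
  qed
  moreover have "w = y + lam *\<^sub>R u" using lam by (simp add: u_def)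
  ultimately show ?thesis by blast
qed

lemma maximal_monotone_resolventE:
  fixes A :: "'a::{real_inner,complete_space} \<Rightarrow> 'a set"
  assumes mm: "maximal_monotone A" and lam: "lam > 0"
  obtains u where "u \<in> A (resolvent A lam x)" "x = resolvent A lam x + lam *\<^sub>R u"
proof -
  have monA: "monotone_op A" using mm unfolding maximal_monotone_def by simp
  have "\<exists>!y. \<exists>u\<in>A y. x = y + lam *\<^sub>R u"
  proof (rule ex_ex1I)
    show "\<exists>y. \<exists>u\<in>A y. x = y + lam *\<^sub>R u" using maximal_monotone_Minty[OF mm lam] .
  next
    fix y\<^sub>1 y\<^sub>2 assume "\<exists>u\<in>A y\<^sub>1. x = y\<^sub>1 + lam *\<^sub>R u" "\<exists>u\<in>A y\<^sub>2. x = y\<^sub>2 + lam *\<^sub>R u"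
    then obtain u\<^sub>1 u\<^sub>2 where u: "u\<^sub>1 \<in> A y\<^sub>1" "u\<^sub>2 \<in> A y\<^sub>2"
      and eq: "y\<^sub>1 - y\<^sub>2 = lam *\<^sub>R (u\<^sub>2 - u\<^sub>1)"
      by (metis (no_types, lifting) add_diff_cancel_left add_diff_eq diff_add_cancel scaleR_right_diff_distrib)
    have "inner (y\<^sub>1 - y\<^sub>2) (y\<^sub>1 - y\<^sub>2) = - lam * inner (y\<^sub>1 - y\<^sub>2) (u\<^sub>1 - u\<^sub>2)"
      by (subst (2) eq) (simp add: inner_diff_right algebra_simps)
    also have "\<dots> \<le> 0" using monotone_opD[OF monA u] lam by (simp add: mult_nonneg_nonneg)
    finally have "inner (y\<^sub>1 - y\<^sub>2) (y\<^sub>1 - y\<^sub>2) = 0" using inner_ge_zero[of "y\<^sub>1 - y\<^sub>2"] by linarith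
    then show "y\<^sub>1 = y\<^sub>2" by simp
  qed
  then have "\<exists>u\<in>A (resolvent A lam x). x = resolvent A lam x + lam *\<^sub>R u"
    unfolding resolvent_def by (rule theI')
  then show thesis using that by blast
qed

lemma inner_resolvent_diff_le:
  fixes A :: "'a::{real_inner,complete_space} \<Rightarrow> 'a set"
  assumes mm: "maximal_monotone A" and lam: "lam > 0" and z: "z \<in> zeros_op A"
  shows "inner (x - z) (resolvent A lam x - x) \<le> - (norm (x - resolvent A lam x))\<^sup>2"
proof -
  define J where "J = resolvent A lam x"
  obtain u where u: "u \<in> A J" "x = J + lam *\<^sub>R u"
    using maximal_monotone_resolventE[OF mm lam] unfolding J_def by blast
  have "0 \<le> inner (J - z) (u - 0)"
    using mm u(1) z by (intro monotone_opD) (auto simp: maximal_monotone_def zeros_op_def)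
  then have mon: "0 \<le> inner (J - z) u" by simp
  have "inner (x - z) (J - x) = - inner (x - J) (x - J) + inner (J - z) (J - x)"
    by (simp add: inner_diff_left inner_diff_right inner_commute)
  also have "inner (J - z) (J - x) = - lam * inner (J - z) u"
    using u(2) by (simp add: inner_diff_right)
  finally show ?thesis unfolding J_def[symmetric] using mon lam
    by (simp add: power2_norm_eq_inner mult_nonneg_nonneg)
qed

lemma has_real_derivative_half_norm_sq:
  assumes "(x has_vector_derivative x') (at t within S)"
  shows "((\<lambda>s. (1/2) * (norm (x s - z))\<^sup>2) has_real_derivative inner (x t - z) x') (at t within S)"
  using assms unfolding has_field_derivative_def has_vector_derivative_def power2_norm_eq_inner
  by (auto intro!: derivative_eq_intros simp: inner_commute algebra_simps)

theorem lemma3p1: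
  fixes A :: "'a::{real_inner, complete_space} \<Rightarrow> 'a set"
    and x x' :: "real \<Rightarrow> 'a" and lam :: "real \<Rightarrow> real"
    and \<theta> :: real and p :: nat and z :: 'a
  assumes mm: "maximal_monotone A"
    and nz: "zeros_op A \<noteq> {}"
    and th: "\<theta> > 0"
    and p: "p \<ge> 1"
    and lam_pos: "\<forall>t\<ge>0. lam t > 0"
    and deriv: "\<forall>t\<ge>0. (x has_vector_derivative x' t) (at t within {0..})"
    and ode: "\<forall>t\<ge>0. x' t + x t - resolvent A (lam t) (x t) = 0"
    and alg: "\<forall>t\<ge>0. lam t * norm (resolvent A (lam t) (x t) - x t) ^ (p - 1) = \<theta>"
    and x0: "x 0 \<in> {y. 0 \<notin> A y}"
    and z: "z \<in> zeros_op A"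
  shows "\<forall>t\<ge>0. \<exists>D. ((\<lambda>s. (1/2) * (norm (x s - z))\<^sup>2) has_real_derivative D) (at t within {0..})
             \<and> D \<le> - (norm (x t - resolvent A (lam t) (x t)))\<^sup>2"
proof (intro allI impI)
  fix t :: real assume t: "t \<ge> 0"
  have "((\<lambda>s. (1/2) * (norm (x s - z))\<^sup>2) has_real_derivative inner (x t - z) (x' t)) (at t within {0..})"
    using deriv t by (intro has_real_derivative_half_norm_sq) simp
  moreover have "x' t = resolvent A (lam t) (x t) - x t" using ode t by (simp add: algebra_simps)
  ultimately have "((\<lambda>s. (1/2) * (norm (x s - z))\<^sup>2) has_real_derivative
      inner (x t - z) (resolvent A (lam t) (x t) - x t)) (at t within {0..})" by simp
  moreover have "inner (x t - z) (resolvent A (lam t) (x t) - x t) \<le> - (norm (x t - resolvent A (lam t) (x t)))\<^sup>2"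
    using inner_resolvent_diff_le[OF mm _ z] lam_pos t by simp
  ultimately show "\<exists>D. ((\<lambda>s. (1/2) * (norm (x s - z))\<^sup>2) has_real_derivative D) (at t within {0..})
      \<and> D \<le> - (norm (x t - resolvent A (lam t) (x t)))\<^sup>2" by blast
qed

end
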